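(* Let $m,n\ge 1$ and let $k>0$ and $l$ be fixed integers. Let $P,Q$ be constant $n\times n$ complex matrices, let $\mathfrak{R}(P)$ be a finite set of distinct invertible constant $n\times n$ matrices $\Lambda$ with $-(\Lambda^{k}+\Lambda^{k-l})=P$, and let $\mathfrak{R}(Q)$ be a finite set of distinct invertible constant $n\times n$ matrices $\tilde\Lambda$ with $-(\tilde\Lambda^{k}+\tilde\Lambda^{k-l})=Q$. For each $\Lambda\in\mathfrak{R}(P)$ let $A_\Lambda$ be a constant $m\times n$ matrix, for each $\tilde\Lambda\in\mathfrak{R}(Q)$ let $B_{\tilde\Lambda}$ be a constant $n\times m$ matrix, and for each pair let $X_{\tilde\Lambda,\Lambda}$ be a constant $n\times n$ matrix satisfying $\tilde\Lambda^{-l}X_{\tilde\Lambda,\Lambda}\Lambda^{l}-X_{\tilde\Lambda,\Lambda}=B_{\tilde\Lambda}A_\Lambda$. Let $\tilde\omega=\tilde\omega(t)$ be a differentiable $n\times n$ matrix function of $t$ only, satisfying $Q\,\tilde\omega=\tilde\omega\,P$, and set $\gamma_2=-\tilde\omega_t$. Define $$\theta=\sum_{\Lambda\in\mathfrak{R}(P)}A_\Lambda e^{\Lambda^l t}\Lambda^j,\qquad \eta=\sum_{\tilde\Lambda\in\mathfrak{R}(Q)}e^{-\tilde\Lambda^l t}\tilde\Lambda^{-j}B_{\tilde\Lambda},$$ $$\tilde\Omega=\sum_{\Lambda\in\mathfrak{R}(P),\,\tilde\Lambda\in\mathfrak{R}(Q)}e^{-\tilde\Lambda^l t}\tilde\Lambda^{-j}X_{\tilde\Lambda,\Lambda}e^{\Lambda^l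 t}\Lambda^j+\tilde\omega,$$ and assume $\tilde\Omega$ is invertible. Let $g_0$ be a constant invertible $m\times m$ matrix. Then $$g=(I-\theta\,\tilde\Omega_{(l)}^{-1}\eta)\,g_0,\qquad \hat q=\theta\,\tilde\Omega_{(l)}^{-1}\gamma_2,\qquad \tilde r=\tilde\Omega^{-1}\eta$$ solve the system $$(g\,g_{(k)}^{-1})_t+(g\,g_{(l)}^{-1})_{(k-l)}-g\,g_{(l)}^{-1}=(\hat q_{(-l)}\tilde r)_{(l)}-(\hat q_{(-l)}\tilde r)_{(k)},$$ $$\hat q_{(k-l)}+\hat q\,P+g\,g_{(k)}^{-1}\hat q_{(k)}=0,\qquad \tilde r_{(l-k)}+P\,\tilde r+(\tilde r\,g)_{(-k)}\,g^{-1}=0$$ (wherever the expressions are defined, in particular where $g$ is invertible).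
   Context: All dependent variables are matrix-valued functions of a continuous variable $t$ and a discrete variable $j\in\mathbb{Z}$; subscript $t$ denotes the derivative with respect to $t$, and for an integer $s$, $f_{(s)}(t,j)=f(t,j+s)$ denotes the shifted function. $I$ denotes the identity matrix. *)

theory Defs
  imports "HOL-Analysis.Analysis"
begin

fun matpow :: "'a::semiring_1^'n^'n \<Rightarrow> nat \<Rightarrow> 'a^'n^'n" where
  "matpow A 0 = mat 1"
| "matpow A (Suc i) = A ** matpow A i"

definition mzpow :: "'a::semiring_1^'n^'n \<Rightarrow> int \<Rightarrow> 'a^'n^'n" where
  "mzpow A z = (if 0 \<le> z then matpow A (nat z) else matpow (matrix_inv A) (nat (- z)))"

definition mexp :: "complex^'n^'n \<Rightarrow> complex^'n^'n" where
  "mexp M = (\<Sum>i. (1 / fact i) *\<^sub>R matpow M i)"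

end

theory Submission
  imports Defs
begin

text \<open>
  As functions of \<open>j\<close>, the sums \<open>\<theta>\<close>, \<open>\<eta>\<close> and \<open>\<Omega>\<close> obey linear shift relations: \<open>\<Omega>_(l) = \<Omega> + \<eta> \<theta>\<close> by the Sylvester equation for \<open>X\<close>,
  \<open>\<theta>_(k) + \<theta>_(k-l) = - \<theta> P\<close> and \<open>\<eta>_(-k) + \<eta>_(l-k) = - Q \<eta>\<close> because every \<open>\<Lambda>\<close> solves
  \<open>-(\<Lambda>^k + \<Lambda>^(k-l)) = P\<close> resp. \<open>Q\<close>, and \<open>Q \<Omega>_(k) = \<Omega> P - \<eta> \<theta>_(k-l)\<close>; in \<open>t\<close> they satisfy
  \<open>\<theta>\<^sub>t = \<theta>_(l)\<close>, \<open>\<eta>\<^sub>t = - \<eta>_(-l)\<close> and \<open>\<Omega>\<^sub>t = \<eta>_(-l) \<theta> - \<gamma>2\<close>. The factor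
  \<open>G = I - \<theta> \<Omega>_(l)\<^sup>-\<^sup>1 \<eta>\<close> of \<open>g = G g0\<close> has the explicit inverse \<open>H = I + \<theta> \<Omega>\<^sup>-\<^sup>1 \<eta>\<close>, so
  every quotient \<open>g g_(s)\<^sup>-\<^sup>1\<close> equals \<open>G H_(s)\<close>, and the two difference equations become
  identities that follow from the shift relations alone. For the evolution equation,
  \<open>H\<^sub>t = N H\<close> with an explicit \<open>N\<close>, hence \<open>(G H_(k))\<^sub>t = G (N_(k) - N) H_(k)\<close>, which is again
  reduced to the shift relations.
\<close>

lemma matrix_add_rdistrib: "((A::'a::semiring_1^'n^'m) + B) ** C = A ** C + B ** C"
  by (vector matrix_matrix_mult_def sum.distrib[symmetric] field_simps)

lemma matrix_diff_ldistrib: "(A::'a::ring_1^'n^'m) ** (B - C) = A ** B - A ** C"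
  by (vector matrix_matrix_mult_def sum_subtractf[symmetric] field_simps)

lemma matrix_diff_rdistrib: "((A::'a::ring_1^'n^'m) - B) ** C = A ** C - B ** C"
  by (vector matrix_matrix_mult_def sum_subtractf[symmetric] field_simps)

lemma matrix_mul_minus_left: "(- (A::'a::ring_1^'n^'m)) ** C = - (A ** C)"
  by (vector matrix_matrix_mult_def sum_negf[symmetric])

lemma matrix_mul_minus_right: "(A::'a::ring_1^'n^'m) ** (- C) = - (A ** C)"
  by (vector matrix_matrix_mult_def sum_negf[symmetric])

lemma matrix_mul_sum_left: "(\<Sum>x\<in>S. f x) ** (C::'a::semiring_1^'p^'n) = (\<Sum>x\<in>S. f x ** C)"
  by (induction S rule: infinite_finite_induct) (auto simp: matrix_add_rdistrib)

lemma matrix_mul_sum_right: "(C::'a::semiring_1^'n^'m) ** (\<Sum>x\<in>S. f x) = (\<Sum>x\<in>S. C ** f x)"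
  by (induction S rule: infinite_finite_induct) (auto simp: matrix_add_ldistrib)

lemmas matrix_ring_simps = matrix_add_ldistrib matrix_add_rdistrib matrix_diff_ldistrib
  matrix_diff_rdistrib matrix_mul_minus_left matrix_mul_minus_right matrix_mul_assoc

lemma matrix_inv_right: "invertible (A::'a::field^'n^'n) \<Longrightarrow> A ** matrix_inv A = mat 1"
  by (metis (mono_tags, lifting) invertible_def matrix_inv_def someI_ex)

lemma matrix_inv_left: "invertible (A::'a::field^'n^'n) \<Longrightarrow> matrix_inv A ** A = mat 1"
  by (metis (mono_tags, lifting) invertible_def matrix_inv_def someI_ex)

lemma matrix_inv_unique:
  assumes "(A::'a::field^'n^'n) ** B = mat 1"
  shows "matrix_inv A = B"
proof -
  have "invertible A"
    using assms matrix_left_right_inverse invertible_def by blast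
  then have "matrix_inv A = matrix_inv A ** (A ** B)"
    by (simp add: assms)
  also have "\<dots> = B"
    by (simp add: matrix_mul_assoc matrix_inv_left \<open>invertible A\<close>)
  finally show ?thesis .
qed

lemma bounded_bilinear_matrix_mult:
  "bounded_bilinear ((**) :: complex^'n^'m \<Rightarrow> complex^'p^'n \<Rightarrow> complex^'p^'m)"
proof -
  have "bilinear ((**) :: complex^'n^'m \<Rightarrow> complex^'p^'n \<Rightarrow> complex^'p^'m)"
    unfolding bilinear_def
    by (auto intro!: linearI
        simp: matrix_add_ldistrib matrix_add_rdistrib matrix_scalar_ac scalar_matrix_assoc)
  then show ?thesis
    by (simp add: bilinear_conv_bounded_bilinear)
qed

lemma has_vector_derivative_matrix_mult:
  fixes f :: "real \<Rightarrow> complex^'n^'m" and g :: "real \<Rightarrow> complex^'p^'n"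
  shows "(f has_vector_derivative f') (at t) \<Longrightarrow> (g has_vector_derivative g') (at t) \<Longrightarrow>
    ((\<lambda>s. f s ** g s) has_vector_derivative (f t ** g' + f' ** g t)) (at t)"
  by (rule bounded_bilinear.has_vector_derivative[OF bounded_bilinear_matrix_mult])

section \<open>Integer powers of an invertible matrix\<close>

lemma mzpow_0 [simp]: "mzpow L 0 = mat 1"
  by (simp add: mzpow_def)

lemma mzpow_succ:
  assumes L: "invertible (L::'a::field^'n^'n)"
  shows "mzpow L (z + 1) = L ** mzpow L z"
proof (cases "0 \<le> z")
  case True
  then have "nat (z + 1) = Suc (nat z)"
    by simp
  with True show ?thesis
    by (simp add: mzpow_def)
next
  case False
  show ?thesis
  proof (cases "z = -1")
    case True
    then show ?thesis
      by (simp add: mzpow_def matrix_inv_right L)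
  next
    case False': False
    with False have z: "z + 1 < 0"
      by simp
    then have "nat (- z) = Suc (nat (- (z + 1)))"
      by simp
    with z False have "mzpow L z = matrix_inv L ** mzpow L (z + 1)"
      by (simp add: mzpow_def)
    then have "L ** mzpow L z = (L ** matrix_inv L) ** mzpow L (z + 1)"
      by (simp add: matrix_mul_assoc)
    then show ?thesis
      by (simp add: matrix_inv_right L)
  qed
qed

lemma mzpow_pred:
  assumes L: "invertible (L::'a::field^'n^'n)"
  shows "mzpow L (z - 1) = matrix_inv L ** mzpow L z"
proof -
  have "matrix_inv L ** mzpow L z = (matrix_inv L ** L) ** mzpow L (z - 1)"
    using mzpow_succ[OF L, of "z - 1"] by (simp add: matrix_mul_assoc)
  then show ?thesis
    by (simp add: matrix_inv_left L)
qed

lemma mzpow_add: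
  assumes L: "invertible (L::'a::field^'n^'n)"
  shows "mzpow L a ** mzpow L b = mzpow L (a + b)"
proof (induction a rule: int_induct[where k = 0])
  case base
  then show ?case
    by simp
next
  case (step1 i)
  have "mzpow L (i + 1) ** mzpow L b = L ** (mzpow L i ** mzpow L b)"
    by (simp add: mzpow_succ[OF L] matrix_mul_assoc)
  also have "\<dots> = mzpow L (i + b + 1)"
    using step1 by (simp add: mzpow_succ[OF L])
  finally show ?case
    by (simp add: algebra_simps)
next
  case (step2 i)
  have "mzpow L (i - 1) ** mzpow L b = matrix_inv L ** (mzpow L i ** mzpow L b)"
    by (simp add: mzpow_pred[OF L] matrix_mul_assoc)
  also have "\<dots> = mzpow L (i + b - 1)"
    using step2 by (simp add: mzpow_pred[OF L])
  finally show ?case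
    by (simp add: algebra_simps)
qed

lemma mzpow_add_left:
  "invertible (L::'a::field^'n^'n) \<Longrightarrow> Y ** mzpow L a ** mzpow L b = Y ** mzpow L (a + b)"
  by (simp add: mzpow_add flip: matrix_mul_assoc)

lemma mzpow_commute:
  "invertible (L::'a::field^'n^'n) \<Longrightarrow> mzpow L a ** mzpow L b = mzpow L b ** mzpow L a"
  by (simp add: mzpow_add add.commute)

section \<open>The matrix exponential\<close>

lemma matpow_scaleR: "matpow (x *\<^sub>R (M::complex^'n^'n)) i = (x ^ i) *\<^sub>R matpow M i"
  by (induction i) (auto simp: matrix_scalar_ac scalar_matrix_assoc[symmetric])

lemma matpow_commute:
  "N ** M = M ** N \<Longrightarrow> N ** matpow (M::'a::semiring_1^'n^'n) i = matpow M i ** N"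
proof (induction i)
  case (Suc i)
  have "N ** matpow M (Suc i) = M ** (N ** matpow M i)"
    using Suc.prems by (simp add: matrix_mul_assoc)
  also have "\<dots> = matpow M (Suc i) ** N"
    using Suc by (simp add: matrix_mul_assoc)
  finally show ?case .
qed simp

lemma norm_matpow_le:
  assumes K: "\<And>A B. norm ((A::complex^'n^'n) ** (B::complex^'n^'n)) \<le> norm A * norm B * K" "0 < K"
  shows "norm (matpow (M::complex^'n^'n) i) \<le> norm (mat 1 :: complex^'n^'n) * (K * norm M) ^ i"
proof (induction i)
  case (Suc i)
  have "norm (matpow M (Suc i)) \<le> norm M * norm (matpow M i) * K"
    using K(1)[of M "matpow M i"] by simp
  also have "\<dots> \<le> norm M * (norm (mat 1 :: complex^'n^'n) * (K * norm M) ^ i) * K"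
    using Suc K(2) by (intro mult_right_mono mult_left_mono) auto
  finally show ?case
    by (simp add: algebra_simps)
qed simp

lemma norm_mexp_term_le:
  assumes K: "\<And>A B. norm ((A::complex^'n^'n) ** (B::complex^'n^'n)) \<le> norm A * norm B * K" "0 < K"
    and x: "\<bar>x\<bar> \<le> R"
  shows "norm ((x ^ i / fact i) *\<^sub>R matpow (M::complex^'n^'n) i)
    \<le> norm (mat 1 :: complex^'n^'n) * (inverse (fact i) * (R * (K * norm M)) ^ i)"
proof -
  have "norm ((x ^ i / fact i) *\<^sub>R matpow M i) = (\<bar>x\<bar> ^ i / fact i) * norm (matpow M i)"
    by (simp add: power_abs)
  also have "\<dots> \<le> (R ^ i / fact i) * (norm (mat 1 :: complex^'n^'n) * (K * norm M) ^ i)"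
    using x norm_matpow_le[OF K] by (intro mult_mono divide_right_mono power_mono) auto
  finally show ?thesis
    by (simp add: power_mult_distrib field_simps)
qed

lemma mexp_sums: "(\<lambda>i. (x ^ i / fact i) *\<^sub>R matpow (M::complex^'n^'n) i) sums mexp (x *\<^sub>R M)"
proof -
  obtain K where K: "\<And>A B. norm ((A::complex^'n^'n) ** (B::complex^'n^'n)) \<le> norm A * norm B * K" "0 < K"
    using bounded_bilinear.pos_bounded[OF bounded_bilinear_matrix_mult] by blast
  have "summable (\<lambda>i. (x ^ i / fact i) *\<^sub>R matpow M i)"
    by (rule summable_comparison_test'[OF summable_mult[OF summable_exp], of 0])
      (use norm_mexp_term_le[OF K order_refl] in auto)
  moreover have "mexp (x *\<^sub>R M) = (\<Sum>i. (x ^ i / fact i) *\<^sub>R matpow M i)"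
    unfolding mexp_def matpow_scaleR by (simp add: divide_inverse mult.commute)
  ultimately show ?thesis
    by (simp add: summable_sums)
qed

lemma mexp_commute:
  assumes "N ** M = M ** N"
  shows "N ** mexp (x *\<^sub>R M) = mexp (x *\<^sub>R M) ** N"
proof -
  have "(\<lambda>i. N ** ((x ^ i / fact i) *\<^sub>R matpow M i)) sums (N ** mexp (x *\<^sub>R M))"
    by (rule bounded_linear.sums[OF bounded_bilinear.bounded_linear_right[OF
          bounded_bilinear_matrix_mult] mexp_sums])
  moreover have "(\<lambda>i. ((x ^ i / fact i) *\<^sub>R matpow M i) ** N) sums (mexp (x *\<^sub>R M) ** N)"
    by (rule bounded_linear.sums[OF bounded_bilinear.bounded_linear_left[OF
          bounded_bilinear_matrix_mult] mexp_sums])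
  ultimately show ?thesis
    by (simp add: matrix_scalar_ac scalar_matrix_assoc[symmetric] matpow_commute[OF assms]
        sums_unique2)
qed

lemma has_vector_derivative_series:
  fixes f f' :: "nat \<Rightarrow> real \<Rightarrow> 'a::banach"
  assumes S: "convex S" "open S" "x \<in> S"
    and f': "\<And>n y. y \<in> S \<Longrightarrow> (f n has_vector_derivative f' n y) (at y)"
    and sums: "\<And>y. y \<in> S \<Longrightarrow> (\<lambda>n. f n y) sums g y"
    and unif: "uniform_limit S (\<lambda>n y. \<Sum>i<n. f' i y) g' sequentially"
  shows "(g has_vector_derivative g' x) (at x)"
proof -
  have "\<exists>h. \<forall>y\<in>S. (\<lambda>n. f n y) sums h y \<and> (h has_derivative (\<lambda>d. d *\<^sub>R g' y)) (at y within S)"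
  proof (rule has_derivative_series[where f' = "\<lambda>n y d. d *\<^sub>R f' n y"])
    show "(f n has_derivative (\<lambda>d. d *\<^sub>R f' n y)) (at y within S)" if "y \<in> S" for n y
      using f'[OF that] by (simp add: has_vector_derivative_def has_derivative_at_withinI)
    show "\<forall>\<^sub>F n in sequentially. \<forall>y\<in>S. \<forall>d. norm ((\<Sum>i<n. d *\<^sub>R f' i y) - d *\<^sub>R g' y) \<le> e * norm d"
      if "e > 0" for e
      using uniform_limitD[OF unif that]
    proof eventually_elim
      case (elim n)
      have "norm ((\<Sum>i<n. d *\<^sub>R f' i y) - d *\<^sub>R g' y) = \<bar>d\<bar> * dist (\<Sum>i<n. f' i y) (g' y)"
        for y d
        by (simp add: dist_norm flip: scaleR_sum_right scaleR_diff_right)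
      moreover have "\<bar>d\<bar> * dist (\<Sum>i<n. f' i y) (g' y) \<le> e * norm d" if "y \<in> S" for y d
        using elim that by (metis abs_ge_zero less_imp_le mult.commute mult_right_mono real_norm_def)
      ultimately show ?case
        by simp
    qed
  qed (use S sums in auto)
  then obtain h where h: "\<And>y. y \<in> S \<Longrightarrow> (\<lambda>n. f n y) sums h y"
    and h': "(h has_derivative (\<lambda>d. d *\<^sub>R g' x)) (at x within S)"
    using S(3) by blast
  have "(h has_vector_derivative g' x) (at x)"
    using h' at_within_open[OF S(3,2)] by (simp add: has_vector_derivative_def)
  then show ?thesis
    by (rule has_vector_derivative_transform_within_open[OF _ S(2,3)])
      (use h sums sums_unique2 in blast)
qed

lemma has_vector_derivative_mexp:
  fixes M :: "complex^'n^'n"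
  shows "((\<lambda>s. mexp (s *\<^sub>R M)) has_vector_derivative M ** mexp (t *\<^sub>R M)) (at t)"
proof -
  obtain K where K: "\<And>A B. norm ((A::complex^'n^'n) ** (B::complex^'n^'n)) \<le> norm A * norm B * K" "0 < K"
    using bounded_bilinear.pos_bounded[OF bounded_bilinear_matrix_mult] by blast
  define u where "u i s = (s ^ i / fact i) *\<^sub>R matpow M i" for i s
  txt \<open>Without its constant term the series differentiates termwise into \<open>M\<close> times itself.\<close>
  define S where "S = ball t 1"
  have u': "(u (Suc i) has_vector_derivative M ** u i s) (at s)" for i s
  proof -
    have "real (Suc i) * s ^ i / fact (Suc i) = s ^ i / fact i"
      by (simp add: fact_Suc del: of_nat_Suc)
    then have "((\<lambda>s. s ^ Suc i / fact (Suc i)) has_real_derivative s ^ i / fact i) (at s)"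
      using DERIV_cdivide[OF DERIV_pow[of "Suc i" s], of "fact (Suc i)"] by simp
    from has_vector_derivative_scaleR[OF this has_vector_derivative_const[of "matpow M (Suc i)"]]
    show ?thesis
      unfolding u_def by (simp add: matrix_scalar_ac scalar_matrix_assoc[symmetric])
  qed
  have "uniform_limit S (\<lambda>n s. \<Sum>i<n. u i s) (\<lambda>s. \<Sum>i. u i s) sequentially"
  proof (rule Weierstrass_m_test[OF _ summable_mult[OF summable_exp]])
    show "norm (u n s) \<le> norm (mat 1 :: complex^'n^'n)
        * (inverse (fact n) * ((\<bar>t\<bar> + 1) * (K * norm M)) ^ n)" if "s \<in> S" for n s
      unfolding u_def using that
      by (intro norm_mexp_term_le[OF K]) (auto simp: S_def dist_real_def)
  qed
  moreover have "(\<Sum>i. u i s) = mexp (s *\<^sub>R M)" for s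
    using sums_unique[OF mexp_sums[of s M]] by (simp add: u_def)
  ultimately have "uniform_limit S (\<lambda>n s. M ** (\<Sum>i<n. u i s)) (\<lambda>s. M ** mexp (s *\<^sub>R M)) sequentially"
    using bounded_linear.uniform_limit[OF bounded_bilinear.bounded_linear_right[OF
          bounded_bilinear_matrix_mult]] by simp
  then have "uniform_limit S (\<lambda>n s. \<Sum>i<n. M ** u i s) (\<lambda>s. M ** mexp (s *\<^sub>R M)) sequentially"
    by (simp only: matrix_mul_sum_right)
  moreover have "(\<lambda>n. u (Suc n) s) sums (mexp (s *\<^sub>R M) - mat 1)" for s
    using mexp_sums[of s M] by (subst sums_Suc_iff) (simp add: u_def)
  ultimately have "((\<lambda>s. mexp (s *\<^sub>R M) - mat 1) has_vector_derivative M ** mexp (t *\<^sub>R M)) (at t)"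
    by (intro has_vector_derivative_series[where f = "\<lambda>n. u (Suc n)"]) (auto simp: S_def intro: u')
  then show ?thesis
    by (simp only: has_vector_derivative_diff_const)
qed

section \<open>Continuity and derivative of the matrix inverse\<close>

lemma matrix_inv_entry:
  fixes A :: "'a::field^'n^'n"
  assumes "invertible A"
  shows "matrix_inv A $ i $ j
    = det ((\<chi> a b. if b = i then (if a = j then 1 else 0) else A $ a $ b)::'a^'n^'n) / det A"
proof -
  have d: "det A \<noteq> 0"
    using assms invertible_det_nz by blast
  let ?e = "(\<chi> i. if i = j then 1 else 0) :: 'a^'n"
  have "A *v (matrix_inv A *v ?e) = ?e"
    by (simp add: matrix_vector_mul_assoc matrix_inv_right assms)
  then have "matrix_inv A *v ?e = (\<chi> c. det ((\<chi> a b. if b = c then ?e $ a else A $ a $ b)::'a^'n^'n) / det A)"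
    using cramer[OF d] by blast
  then have "(matrix_inv A *v ?e) $ i = det ((\<chi> a b. if b = i then ?e $ a else A $ a $ b)::'a^'n^'n) / det A"
    by simp
  moreover have "(matrix_inv A *v ?e) $ i = matrix_inv A $ i $ j"
    by (simp add: matrix_vector_mult_def if_distrib if_distribR cong: if_cong)
  moreover have "((\<chi> a b. if b = i then ?e $ a else A $ a $ b)::'a^'n^'n)
      = (\<chi> a b. if b = i then (if a = j then 1 else 0) else A $ a $ b)"
    by (simp add: vec_eq_iff)
  ultimately show ?thesis
    by simp
qed

lemma tendsto_det:
  fixes M :: "'b \<Rightarrow> 'a::real_normed_field^'n^'n"
  assumes "\<And>i j. ((\<lambda>s. M s $ i $ j) \<longlongrightarrow> M0 $ i $ j) F"
  shows "((\<lambda>s. det (M s)) \<longlongrightarrow> det M0) F"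
  unfolding det_def by (intro tendsto_intros assms)

lemma tendsto_matrix_inv:
  fixes M :: "'b \<Rightarrow> complex^'n^'n"
  assumes lim: "(M \<longlongrightarrow> M0) F" and inv: "\<And>s. invertible (M s)" and inv0: "invertible M0"
  shows "((\<lambda>s. matrix_inv (M s)) \<longlongrightarrow> matrix_inv M0) F"
proof (intro vec_tendstoI)
  fix i j
  let ?C = "\<lambda>N::complex^'n^'n. (\<chi> a b. if b = i then (if a = j then 1 else 0) else N $ a $ b)::complex^'n^'n"
  have entries: "((\<lambda>s. M s $ a $ b) \<longlongrightarrow> M0 $ a $ b) F" for a b
    by (intro tendsto_vec_nth lim)
  then have "((\<lambda>s. ?C (M s) $ a $ b) \<longlongrightarrow> ?C M0 $ a $ b) F" for a b
    by (cases "b = i") simp_all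
  then have "((\<lambda>s. det (?C (M s)) / det (M s)) \<longlongrightarrow> det (?C M0) / det M0) F"
    using inv0 invertible_det_nz by (intro tendsto_divide tendsto_det entries) blast+
  then show "((\<lambda>s. matrix_inv (M s) $ i $ j) \<longlongrightarrow> matrix_inv M0 $ i $ j) F"
    by (simp add: matrix_inv_entry inv inv0)
qed
lemma matrix_inv_diff:
  assumes "invertible (A::'a::field^'n^'n)" "invertible B"
  shows "matrix_inv A - matrix_inv B = - (matrix_inv A ** (A - B) ** matrix_inv B)"
proof -
  have "matrix_inv A ** (A - B) ** matrix_inv B
      = (matrix_inv A ** A) ** matrix_inv B - matrix_inv A ** (B ** matrix_inv B)"
    by (simp add: matrix_ring_simps)
  also have "\<dots> = matrix_inv B - matrix_inv A"
    by (simp add: matrix_inv_left matrix_inv_right assms)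
  finally show ?thesis
    by simp
qed

lemma has_vector_derivative_matrix_inv:
  fixes M :: "real \<Rightarrow> complex^'n^'n"
  assumes M': "(M has_vector_derivative M') (at t)" and inv: "\<And>s. invertible (M s)"
  shows "((\<lambda>s. matrix_inv (M s)) has_vector_derivative
    - (matrix_inv (M t) ** M' ** matrix_inv (M t))) (at t)"
proof -
  define N where "N s = matrix_inv (M s)" for s
  define R where "R y = ((M y - M t) - (y - t) *\<^sub>R M') /\<^sub>R norm (y - t)" for y
  note bb = bounded_bilinear_matrix_mult[where 'm = 'n and 'n = 'n and 'p = 'n]
  have R: "(R \<longlongrightarrow> 0) (at t)"
    using M' unfolding has_vector_derivative_def has_derivative_at_within R_def by simp
  have "(M \<longlongrightarrow> M t) (at t)"
    using has_vector_derivative_continuous[OF M'] by (simp add: continuous_within)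
  then have N: "(N \<longlongrightarrow> N t) (at t)"
    unfolding N_def by (rule tendsto_matrix_inv[OF _ inv inv])
  have quotient: "((N y - N t) - (y - t) *\<^sub>R - (N t ** M' ** N t)) /\<^sub>R norm (y - t)
      = - (N y ** R y ** N t) - ((y - t) / norm (y - t)) *\<^sub>R ((N y - N t) ** M' ** N t)" for y
  proof -
    have "(N y - N t) - (y - t) *\<^sub>R - (N t ** M' ** N t)
        = - (N y ** (M y - M t) ** N t) - (y - t) *\<^sub>R - (N t ** M' ** N t)"
      by (simp only: N_def matrix_inv_diff[OF inv inv])
    also have "\<dots> = - (N y ** ((M y - M t) - (y - t) *\<^sub>R M') ** N t)
        - (y - t) *\<^sub>R ((N y - N t) ** M' ** N t)"
      by (simp add: matrix_ring_simps matrix_scalar_ac scalar_matrix_assoc[symmetric] algebra_simps)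
    finally have "(N y - N t) - (y - t) *\<^sub>R - (N t ** M' ** N t)
        = - (N y ** ((M y - M t) - (y - t) *\<^sub>R M') ** N t)
        - (y - t) *\<^sub>R ((N y - N t) ** M' ** N t)" .
    moreover have "N y ** R y ** N t
        = inverse (norm (y - t)) *\<^sub>R (N y ** ((M y - M t) - (y - t) *\<^sub>R M') ** N t)"
      unfolding R_def by (simp only: matrix_scalar_ac scalar_matrix_assoc[symmetric])
    ultimately show ?thesis
      by (simp add: scaleR_diff_right divide_inverse mult.commute)
  qed
  have "((\<lambda>y. N y ** R y ** N t) \<longlongrightarrow> 0) (at t)"
    using bounded_bilinear.tendsto[OF bb bounded_bilinear.tendsto[OF bb N R] tendsto_const] by simp
  moreover have "((\<lambda>y. ((y - t) / norm (y - t)) *\<^sub>R ((N y - N t) ** M' ** N t)) \<longlongrightarrow> 0) (at t)"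
  proof (rule Lim_null_comparison)
    have "((\<lambda>y. N y - N t) \<longlongrightarrow> 0) (at t)"
      using tendsto_diff[OF N tendsto_const[of "N t"]] by simp
    from bounded_bilinear.tendsto[OF bb bounded_bilinear.tendsto[OF bb this tendsto_const] tendsto_const]
    show "((\<lambda>y. norm ((N y - N t) ** M' ** N t)) \<longlongrightarrow> 0) (at t)"
      by (simp add: tendsto_norm_zero)
    show "\<forall>\<^sub>F y in at t. norm (((y - t) / norm (y - t)) *\<^sub>R ((N y - N t) ** M' ** N t))
        \<le> norm ((N y - N t) ** M' ** N t)"
      by (intro always_eventually allI) (case_tac "y = t", simp_all)
  qed
  ultimately have "((\<lambda>y. ((N y - N t) - (y - t) *\<^sub>R - (N t ** M' ** N t)) /\<^sub>R norm (y - t))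
      \<longlongrightarrow> 0) (at t)"
    unfolding quotient using tendsto_diff[OF tendsto_minus] by fastforce
  then show ?thesis
    unfolding has_vector_derivative_def has_derivative_at_within N_def
    by (simp add: bounded_linear_minus bounded_linear_scaleR_left)
qed

section \<open>The algebra of the dressing factors\<close>

locale dressing_relations =
  fixes \<theta> :: "int \<Rightarrow> 'a::field^'n^'m" and \<eta> :: "int \<Rightarrow> 'a^'m^'n" and \<Omega> :: "int \<Rightarrow> 'a^'n^'n"
    and P Q \<gamma> :: "'a^'n^'n" and k l :: int
  assumes Omega_shift: "\<Omega> (j + l) = \<Omega> j + \<eta> j ** \<theta> j"
    and theta_shift: "\<theta> (j + k) + \<theta> (j + k - l) = - (\<theta> j ** P)"
    and eta_shift: "\<eta> (j - k) + \<eta> (j - k + l) = - (Q ** \<eta> j)"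
    and Q_Omega: "Q ** \<Omega> (j + k) = \<Omega> j ** P - \<eta> j ** \<theta> (j + k - l)"
    and Q_gamma: "Q ** \<gamma> = \<gamma> ** P"
    and Omega_invertible: "invertible (\<Omega> j)"
begin

abbreviation "\<Omega>i j \<equiv> matrix_inv (\<Omega> j)"

text \<open>In the notation of the theorem \<open>g = G g0\<close>; \<open>H\<close> turns out to be the inverse of \<open>G\<close>.\<close>

definition "G j = mat 1 - \<theta> j ** \<Omega>i (j + l) ** \<eta> j"
definition "H j = mat 1 + \<theta> j ** \<Omega>i j ** \<eta> j"

lemma Omega_inv_cancel:
  "\<Omega> j ** \<Omega>i j = mat 1" "\<Omega>i j ** \<Omega> j = mat 1"
  "X ** \<Omega> j ** \<Omega>i j = X" "X ** \<Omega>i j ** \<Omega> j = X"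
  by (simp_all add: matrix_inv_left matrix_inv_right Omega_invertible flip: matrix_mul_assoc)

lemma eta_theta: "X ** \<eta> j ** \<theta> j = X ** \<Omega> (j + l) - X ** \<Omega> j"
  by (simp add: Omega_shift matrix_ring_simps)

lemma G_theta: "G j ** \<theta> j = \<theta> j ** \<Omega>i (j + l) ** \<Omega> j"
proof -
  have "G j ** \<theta> j = \<theta> j - \<theta> j ** \<Omega>i (j + l) ** \<eta> j ** \<theta> j"
    by (simp add: G_def matrix_ring_simps)
  then show ?thesis
    by (simp add: eta_theta Omega_inv_cancel)
qed

lemma eta_G: "\<eta> j ** G j = \<Omega> j ** \<Omega>i (j + l) ** \<eta> j"
proof -
  have "\<eta> j ** G j = \<eta> j - (mat 1 ** \<eta> j ** \<theta> j) ** \<Omega>i (j + l) ** \<eta> j"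
    by (simp add: G_def matrix_ring_simps)
  then show ?thesis
    by (simp only: eta_theta) (simp add: matrix_ring_simps Omega_inv_cancel)
qed

lemma eta_H: "\<eta> j ** H j = \<Omega> (j + l) ** \<Omega>i j ** \<eta> j"
proof -
  have "\<eta> j ** H j = \<eta> j + (mat 1 ** \<eta> j ** \<theta> j) ** \<Omega>i j ** \<eta> j"
    by (simp add: H_def matrix_ring_simps)
  then show ?thesis
    by (simp only: eta_theta) (simp add: matrix_ring_simps Omega_inv_cancel)
qed

lemma G_H_inverse: "G j ** H j = mat 1" "H j ** G j = mat 1"
proof -
  have "G j ** H j = H j - \<theta> j ** \<Omega>i (j + l) ** (\<eta> j ** H j)"
    by (simp add: G_def matrix_ring_simps)
  also have "\<dots> = H j - \<theta> j ** \<Omega>i j ** \<eta> j"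
    by (simp add: eta_H matrix_ring_simps Omega_inv_cancel)
  finally show "G j ** H j = mat 1"
    by (simp add: H_def)
  then show "H j ** G j = mat 1"
    using matrix_left_right_inverse by blast
qed

lemma G_H_cancel: "X ** G j ** H j = X" "X ** H j ** G j = X"
  by (simp_all add: G_H_inverse flip: matrix_mul_assoc)

lemma Omega_inv_eta_G: "X ** \<Omega>i j ** \<eta> j ** G j = X ** \<Omega>i (j + l) ** \<eta> j"
proof -
  have "X ** \<Omega>i j ** \<eta> j ** G j = X ** \<Omega>i j ** (\<eta> j ** G j)"
    by (simp add: matrix_mul_assoc)
  then show ?thesis
    by (simp add: eta_G matrix_mul_assoc Omega_inv_cancel)
qed

lemma G_theta_Omega_inv: "X ** G j ** \<theta> j ** \<Omega>i j = X ** \<theta> j ** \<Omega>i (j + l)"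
proof -
  have "X ** G j ** \<theta> j ** \<Omega>i j = X ** (G j ** \<theta> j) ** \<Omega>i j"
    by (simp add: matrix_mul_assoc)
  then show ?thesis
    by (simp add: G_theta matrix_mul_assoc Omega_inv_cancel)
qed

lemma H_theta_Omega_inv: "X ** H j ** \<theta> j ** \<Omega>i (j + l) = X ** \<theta> j ** \<Omega>i j"
proof -
  have "X ** H j ** \<theta> j ** \<Omega>i (j + l) = X ** H j ** (G j ** \<theta> j ** \<Omega>i j)"
    using G_theta_Omega_inv[of "mat 1" j] by (simp add: matrix_ring_simps)
  then show ?thesis
    by (simp add: matrix_ring_simps G_H_cancel)
qed

lemma Omega_inv_Q:
  "X ** \<Omega>i j ** Q = X ** P ** \<Omega>i (j + k) - X ** \<Omega>i j ** \<eta> j ** \<theta> (j + k - l) ** \<Omega>i (j + k)"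
proof -
  have "X ** \<Omega>i j ** Q = X ** \<Omega>i j ** (Q ** \<Omega> (j + k)) ** \<Omega>i (j + k)"
    by (simp add: matrix_ring_simps Omega_inv_cancel)
  then show ?thesis
    by (simp add: Q_Omega matrix_ring_simps Omega_inv_cancel)
qed

lemma theta_P_eq: "\<theta> j ** P = - (\<theta> (j + k) + \<theta> (j + k - l))"
  using theta_shift by (metis minus_minus)

lemma Q_eta_eq: "Q ** \<eta> j = - (\<eta> (j - k) + \<eta> (j - k + l))"
  using eta_shift by (metis minus_minus)

lemma theta_P: "X ** \<theta> j ** P = - (X ** \<theta> (j + k)) - X ** \<theta> (j + k - l)"
proof -
  have "X ** (\<theta> j ** P) = - (X ** \<theta> (j + k)) - X ** \<theta> (j + k - l)"
    by (simp add: theta_P_eq matrix_ring_simps)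
  then show ?thesis
    by (simp add: matrix_mul_assoc)
qed

lemma Q_eta: "X ** Q ** \<eta> j = - (X ** \<eta> (j - k)) - X ** \<eta> (j - k + l)"
proof -
  have "X ** (Q ** \<eta> j) = - (X ** \<eta> (j - k)) - X ** \<eta> (j - k + l)"
    by (simp add: Q_eta_eq matrix_ring_simps)
  then show ?thesis
    by (simp add: matrix_mul_assoc)
qed

lemma gamma_P: "X ** \<gamma> ** P = X ** Q ** \<gamma>"
  by (simp add: Q_gamma flip: matrix_mul_assoc)

lemma q_relation:
  "\<theta> (j + k - l) ** \<Omega>i (j + k) ** \<gamma> + \<theta> j ** \<Omega>i (j + l) ** \<gamma> ** P
    + G j ** H (j + k) ** (\<theta> (j + k) ** \<Omega>i (j + k + l) ** \<gamma>) = 0"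
proof -
  have "G j ** H (j + k) ** (\<theta> (j + k) ** \<Omega>i (j + k + l) ** \<gamma>)
      = G j ** \<theta> (j + k) ** \<Omega>i (j + k) ** \<gamma>"
    using H_theta_Omega_inv[of "G j" "j + k"] by (simp add: matrix_ring_simps)
  moreover have "\<theta> j ** \<Omega>i (j + l) ** \<gamma> ** P = G j ** \<theta> j ** \<Omega>i j ** Q ** \<gamma>"
    using G_theta_Omega_inv[of "mat 1" j] by (simp add: gamma_P)
  moreover have "G j ** \<theta> j ** \<Omega>i j ** Q ** \<gamma> = G j ** \<theta> j ** P ** \<Omega>i (j + k) ** \<gamma>
      - G j ** \<theta> j ** \<Omega>i j ** \<eta> j ** \<theta> (j + k - l) ** \<Omega>i (j + k) ** \<gamma>"
    using Omega_inv_Q[of "G j ** \<theta> j" j] by (simp add: matrix_ring_simps)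
  moreover have "G j ** \<theta> j ** P ** \<Omega>i (j + k) ** \<gamma>
      = - (G j ** \<theta> (j + k) ** \<Omega>i (j + k) ** \<gamma>) - G j ** \<theta> (j + k - l) ** \<Omega>i (j + k) ** \<gamma>"
    using theta_P[of "G j" j] by (simp add: matrix_ring_simps)
  moreover have "G j ** \<theta> (j + k - l) ** \<Omega>i (j + k) ** \<gamma>
      + G j ** \<theta> j ** \<Omega>i j ** \<eta> j ** \<theta> (j + k - l) ** \<Omega>i (j + k) ** \<gamma>
      = \<theta> (j + k - l) ** \<Omega>i (j + k) ** \<gamma>"
  proof -
    have "G j ** \<theta> (j + k - l) ** \<Omega>i (j + k) ** \<gamma>
        + G j ** \<theta> j ** \<Omega>i j ** \<eta> j ** \<theta> (j + k - l) ** \<Omega>i (j + k) ** \<gamma>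
        = G j ** H j ** \<theta> (j + k - l) ** \<Omega>i (j + k) ** \<gamma>"
      by (simp add: H_def matrix_ring_simps)
    then show ?thesis
      by (simp add: G_H_inverse)
  qed
  ultimately show ?thesis
    by (simp add: algebra_simps)
qed

lemma H_G_shift:
  "H (j + l) ** G (j + k)
    = mat 1 + \<theta> (j + k + l) ** \<Omega>i (j + k + l) ** \<eta> (j + k) - \<theta> (j + l) ** \<Omega>i (j + l) ** \<eta> j"
proof -
  let ?X = "\<theta> (j + l) ** \<Omega>i (j + l)"
  have idx: "j + l + k = j + k + l" "j + l + k - l = j + k"
    by simp_all
  have "H (j + l) ** G (j + k) = mat 1 + ?X ** \<eta> (j + l) - \<theta> (j + k) ** \<Omega>i (j + k + l) ** \<eta> (j + k)
      - ?X ** \<eta> (j + l) ** \<theta> (j + k) ** \<Omega>i (j + k + l) ** \<eta> (j + k)"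
    by (simp add: G_def H_def matrix_ring_simps algebra_simps)
  moreover have "?X ** \<eta> (j + l) ** \<theta> (j + k) ** \<Omega>i (j + k + l) ** \<eta> (j + k)
      = \<theta> (j + l) ** P ** \<Omega>i (j + k + l) ** \<eta> (j + k) - ?X ** Q ** \<eta> (j + k)"
    using Omega_inv_Q[of "\<theta> (j + l)" "j + l"] unfolding idx by (simp add: matrix_ring_simps)
  moreover have "?X ** Q ** \<eta> (j + k) = - (?X ** \<eta> j) - ?X ** \<eta> (j + l)"
    using Q_eta[of ?X "j + k"] by simp
  moreover have "\<theta> (j + l) ** P ** \<Omega>i (j + k + l) ** \<eta> (j + k)
      = - (\<theta> (j + k + l) ** \<Omega>i (j + k + l) ** \<eta> (j + k)) - \<theta> (j + k) ** \<Omega>i (j + k + l) ** \<eta> (j + k)"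
    using theta_P[of "mat 1" "j + l"] unfolding idx by (simp add: matrix_ring_simps)
  ultimately show ?thesis
    by (simp add: algebra_simps)
qed

lemma Q_Omega_shifted: "Q ** \<Omega> (j + k) = \<Omega> (j + l) ** P + \<eta> j ** \<theta> (j + k)"
proof -
  have "\<eta> j ** (\<theta> j ** P) = - (\<eta> j ** \<theta> (j + k)) - \<eta> j ** \<theta> (j + k - l)"
    by (simp add: theta_P_eq matrix_ring_simps)
  then show ?thesis
    by (simp add: Q_Omega Omega_shift matrix_ring_simps)
qed

lemma Omega_inv_shifted_Q:
  "X ** \<Omega>i (j + l) ** Q
    = X ** P ** \<Omega>i (j + k) + X ** \<Omega>i (j + l) ** \<eta> j ** \<theta> (j + k) ** \<Omega>i (j + k)"
proof -
  have "X ** \<Omega>i (j + l) ** Q = X ** \<Omega>i (j + l) ** (Q ** \<Omega> (j + k)) ** \<Omega>i (j + k)"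
    by (simp add: matrix_ring_simps Omega_inv_cancel)
  then show ?thesis
    by (simp add: Q_Omega_shifted matrix_ring_simps Omega_inv_cancel)
qed

lemma r_relation:
  "\<Omega>i (j + l) ** \<eta> (j + l) + P ** \<Omega>i (j + k) ** \<eta> (j + k) + \<Omega>i j ** \<eta> j ** G j ** H (j + k) = 0"
proof -
  let ?Y = "\<Omega>i (j + l) ** \<eta> j ** \<theta> (j + k) ** \<Omega>i (j + k) ** \<eta> (j + k)"
  have "\<Omega>i j ** \<eta> j ** G j ** H (j + k) = \<Omega>i (j + l) ** \<eta> j + ?Y"
    using Omega_inv_eta_G[of "mat 1" j] by (simp add: H_def matrix_ring_simps)
  moreover have "\<Omega>i (j + l) ** Q ** \<eta> (j + k) = - (\<Omega>i (j + l) ** \<eta> j) - \<Omega>i (j + l) ** \<eta> (j + l)"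
    using Q_eta[of "\<Omega>i (j + l)" "j + k"] by simp
  moreover have "\<Omega>i (j + l) ** Q ** \<eta> (j + k) = P ** \<Omega>i (j + k) ** \<eta> (j + k) + ?Y"
    using Omega_inv_shifted_Q[of "mat 1" j] by (simp add: matrix_ring_simps)
  ultimately show ?thesis
    by (simp add: algebra_simps)
qed

lemma G_quotient:
  fixes g0 :: "'a^'m^'m"
  assumes "invertible g0"
  shows "G a ** g0 ** matrix_inv (G b ** g0) = G a ** H b"
proof -
  have "G b ** g0 ** (matrix_inv g0 ** H b) = G b ** (g0 ** matrix_inv g0) ** H b"
    by (simp add: matrix_mul_assoc)
  then have "matrix_inv (G b ** g0) = matrix_inv g0 ** H b"
    by (intro matrix_inv_unique) (simp add: matrix_inv_right[OF assms] G_H_inverse)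
  moreover have "G a ** g0 ** (matrix_inv g0 ** H b) = G a ** (g0 ** matrix_inv g0) ** H b"
    by (simp add: matrix_mul_assoc)
  ultimately show ?thesis
    by (simp add: matrix_inv_right[OF assms])
qed

text \<open>Along the flow below this is \<open>H\<^sub>t H\<^sup>-\<^sup>1\<close>, see \<open>has_vector_derivative_H\<close>.\<close>

definition "logderiv_H j = \<theta> (j + l) ** \<Omega>i (j + l) ** \<eta> j
  + \<theta> j ** \<Omega>i j ** \<gamma> ** \<Omega>i (j + l) ** \<eta> j - \<theta> j ** \<Omega>i j ** \<eta> (j - l)"

lemma logderiv_H_eq:
  "(\<theta> (j + l) ** \<Omega>i j ** \<eta> j - \<theta> j ** \<Omega>i j ** (\<eta> (j - l) ** \<theta> j - \<gamma>) ** \<Omega>i j ** \<eta> j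
     - \<theta> j ** \<Omega>i j ** \<eta> (j - l)) ** G j = logderiv_H j"
proof -
  have "\<theta> j ** \<Omega>i j ** \<eta> (j - l) ** G j
      = \<theta> j ** \<Omega>i j ** \<eta> (j - l) - \<theta> j ** \<Omega>i j ** \<eta> (j - l) ** \<theta> j ** \<Omega>i (j + l) ** \<eta> j"
    by (simp add: G_def matrix_ring_simps)
  then show ?thesis
    by (simp add: logderiv_H_def matrix_diff_rdistrib Omega_inv_eta_G matrix_ring_simps algebra_simps)
qed

lemma Omega_inv_eta_shifted_G:
  "X ** \<Omega>i (j + l) ** \<eta> (j + l) ** G (j + k)
    = - (X ** P ** \<Omega>i (j + k + l) ** \<eta> (j + k)) - X ** \<Omega>i (j + l) ** \<eta> j"
proof -
  have "X ** (\<Omega>i (j + l) ** \<eta> (j + l) + P ** \<Omega>i (j + k) ** \<eta> (j + k)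
      + \<Omega>i j ** \<eta> j ** G j ** H (j + k)) ** G (j + k) = 0"
    by (simp add: r_relation)
  then have "X ** \<Omega>i (j + l) ** \<eta> (j + l) ** G (j + k) + X ** P ** \<Omega>i (j + k + l) ** \<eta> (j + k)
      + X ** \<Omega>i (j + l) ** \<eta> j = 0"
    by (simp add: matrix_ring_simps Omega_inv_eta_G G_H_cancel)
  then show ?thesis
    by (simp add: algebra_simps eq_neg_iff_add_eq_0)
qed

lemma H_theta_gamma:
  "H j ** \<theta> (j + k - l) ** \<Omega>i (j + k) ** \<gamma>
    = - (\<theta> j ** \<Omega>i j ** \<gamma> ** P) - \<theta> (j + k) ** \<Omega>i (j + k) ** \<gamma>"
proof -
  have "H j ** (\<theta> (j + k - l) ** \<Omega>i (j + k) ** \<gamma> + \<theta> j ** \<Omega>i (j + l) ** \<gamma> ** P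
      + G j ** H (j + k) ** (\<theta> (j + k) ** \<Omega>i (j + k + l) ** \<gamma>)) = 0"
    by (simp add: q_relation)
  then have "H j ** \<theta> (j + k - l) ** \<Omega>i (j + k) ** \<gamma> + \<theta> j ** \<Omega>i j ** \<gamma> ** P
      + \<theta> (j + k) ** \<Omega>i (j + k) ** \<gamma> = 0"
    using H_theta_Omega_inv[of "mat 1", simplified] by (simp add: matrix_ring_simps G_H_inverse)
  then show ?thesis
    by (simp add: algebra_simps eq_neg_iff_add_eq_0)
qed

lemma G_logderiv_H_diff:
  "G j ** (logderiv_H (j + k) - logderiv_H j) ** H (j + k)
    = \<theta> j ** \<Omega>i (j + l) ** \<gamma> ** \<Omega>i (j + l) ** \<eta> (j + l)
      - \<theta> (j + k - l) ** \<Omega>i (j + k) ** \<gamma> ** \<Omega>i (j + k) ** \<eta> (j + k)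
      - G (j + k - l) ** H (j + k) + G j ** H (j + l)"
    (is "_ = ?R")
proof -
  have idx: "j - l + l = j" "j - l + k = j + k - l" "j - l + k + l = j + k"
    by simp_all
  let ?a = "\<theta> j ** \<Omega>i j ** \<gamma> ** P ** \<Omega>i (j + k + l) ** \<eta> (j + k)"
  have t1: "H j ** \<theta> j ** \<Omega>i (j + l) ** \<gamma> ** \<Omega>i (j + l) ** \<eta> (j + l) ** G (j + k)
      = - ?a - \<theta> j ** \<Omega>i j ** \<gamma> ** \<Omega>i (j + l) ** \<eta> j"
    using H_theta_Omega_inv[of "mat 1" j, simplified] by (simp add: Omega_inv_eta_shifted_G)
  have t2: "H j ** \<theta> (j + k - l) ** \<Omega>i (j + k) ** \<gamma> ** \<Omega>i (j + k) ** \<eta> (j + k) ** G (j + k)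
      = - ?a - \<theta> (j + k) ** \<Omega>i (j + k) ** \<gamma> ** \<Omega>i (j + k + l) ** \<eta> (j + k)"
    by (simp only: Omega_inv_eta_G H_theta_gamma matrix_ring_simps)
  have t3: "H j ** G (j + k - l) ** H (j + k) ** G (j + k)
      = mat 1 + \<theta> (j + k) ** \<Omega>i (j + k) ** \<eta> (j + k - l) - \<theta> j ** \<Omega>i j ** \<eta> (j - l)"
    using H_G_shift[of "j - l"] unfolding idx by (simp add: G_H_cancel)
  have t4: "H j ** G j ** H (j + l) ** G (j + k)
      = mat 1 + \<theta> (j + k + l) ** \<Omega>i (j + k + l) ** \<eta> (j + k) - \<theta> (j + l) ** \<Omega>i (j + l) ** \<eta> j"
    by (simp add: G_H_inverse H_G_shift)
  have "H j ** ?R ** G (j + k)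
      = H j ** \<theta> j ** \<Omega>i (j + l) ** \<gamma> ** \<Omega>i (j + l) ** \<eta> (j + l) ** G (j + k)
        - H j ** \<theta> (j + k - l) ** \<Omega>i (j + k) ** \<gamma> ** \<Omega>i (j + k) ** \<eta> (j + k) ** G (j + k)
        - H j ** G (j + k - l) ** H (j + k) ** G (j + k) + H j ** G j ** H (j + l) ** G (j + k)"
    by (simp only: matrix_ring_simps)
  also have "\<dots> = logderiv_H (j + k) - logderiv_H j"
    unfolding t1 t2 t3 t4 logderiv_H_def by (simp add: algebra_simps)
  finally have conjugated: "H j ** ?R ** G (j + k) = logderiv_H (j + k) - logderiv_H j" .
  have "G j ** (H j ** ?R ** G (j + k)) ** H (j + k) = ?R"
    by (simp add: matrix_ring_simps G_H_inverse G_H_cancel)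
  then show ?thesis
    by (simp only: conjugated)
qed

end

section \<open>The dressing factors along the flow\<close>

locale dressing_flow =
  fixes \<theta> :: "real \<Rightarrow> int \<Rightarrow> complex^'n^'m" and \<eta> :: "real \<Rightarrow> int \<Rightarrow> complex^'m^'n"
    and \<Omega> :: "real \<Rightarrow> int \<Rightarrow> complex^'n^'n" and P Q :: "complex^'n^'n"
    and \<gamma> :: "real \<Rightarrow> complex^'n^'n" and k l :: int
  assumes relations: "dressing_relations (\<theta> t) (\<eta> t) (\<Omega> t) P Q (\<gamma> t) k l"
    and theta_derivative: "((\<lambda>s. \<theta> s j) has_vector_derivative \<theta> t (j + l)) (at t)"
    and eta_derivative: "((\<lambda>s. \<eta> s j) has_vector_derivative - \<eta> t (j - l)) (at t)"
    and Omega_derivative: "((\<lambda>s. \<Omega> s j) has_vector_derivative \<eta> t (j - l) ** \<theta> t j - \<gamma> t) (at t)"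
begin

abbreviation "G t \<equiv> dressing_relations.G (\<theta> t) (\<eta> t) (\<Omega> t) l"
abbreviation "H t \<equiv> dressing_relations.H (\<theta> t) (\<eta> t) (\<Omega> t)"
abbreviation "logderiv_H t \<equiv> dressing_relations.logderiv_H (\<theta> t) (\<eta> t) (\<Omega> t) (\<gamma> t) l"

lemma has_vector_derivative_H:
  "((\<lambda>s. H s j) has_vector_derivative logderiv_H t j ** H t j) (at t)"
proof -
  let ?Oi = "matrix_inv (\<Omega> t j)"
  have "((\<lambda>s. matrix_inv (\<Omega> s j)) has_vector_derivative
      - (?Oi ** (\<eta> t (j - l) ** \<theta> t j - \<gamma> t) ** ?Oi)) (at t)"
    using dressing_relations.Omega_invertible[OF relations]
    by (intro has_vector_derivative_matrix_inv Omega_derivative)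
  then have "((\<lambda>s. mat 1 + \<theta> s j ** matrix_inv (\<Omega> s j) ** \<eta> s j) has_vector_derivative
      \<theta> t (j + l) ** ?Oi ** \<eta> t j - \<theta> t j ** ?Oi ** (\<eta> t (j - l) ** \<theta> t j - \<gamma> t) ** ?Oi ** \<eta> t j
        - \<theta> t j ** ?Oi ** \<eta> t (j - l)) (at t)"
    by (auto intro!: derivative_eq_intros has_vector_derivative_matrix_mult theta_derivative
        eta_derivative simp: matrix_ring_simps algebra_simps)
  moreover have "\<theta> t (j + l) ** ?Oi ** \<eta> t j
      - \<theta> t j ** ?Oi ** (\<eta> t (j - l) ** \<theta> t j - \<gamma> t) ** ?Oi ** \<eta> t j
      - \<theta> t j ** ?Oi ** \<eta> t (j - l) = logderiv_H t j ** H t j"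
    by (simp add: dressing_relations.G_H_cancel[OF relations]
        flip: dressing_relations.logderiv_H_eq[OF relations])
  ultimately show ?thesis
    by (simp add: dressing_relations.H_def[OF relations])
qed

lemma has_vector_derivative_G:
  "((\<lambda>s. G s j) has_vector_derivative - (G t j ** logderiv_H t j)) (at t)"
proof -
  have inverse: "matrix_inv (H s j) = G s j" for s
    by (intro matrix_inv_unique dressing_relations.G_H_inverse[OF relations])
  have "((\<lambda>s. matrix_inv (H s j)) has_vector_derivative
      - (matrix_inv (H t j) ** (logderiv_H t j ** H t j) ** matrix_inv (H t j))) (at t)"
    using dressing_relations.G_H_inverse[OF relations] invertible_def
    by (intro has_vector_derivative_matrix_inv has_vector_derivative_H) blast
  then show ?thesis
    unfolding inverse by (simp add: matrix_mul_assoc dressing_relations.G_H_cancel[OF relations])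
qed

lemma has_vector_derivative_G_H:
  "((\<lambda>s. G s j ** H s (j + k)) has_vector_derivative
     G t j ** (logderiv_H t (j + k) - logderiv_H t j) ** H t (j + k)) (at t)"
  using has_vector_derivative_matrix_mult[OF has_vector_derivative_G has_vector_derivative_H]
  by (simp add: matrix_ring_simps)

end

section \<open>Exponential solutions of the shift relations\<close>

lemma mzpow_mexp_commute:
  "invertible (L::complex^'n^'n) \<Longrightarrow>
    mzpow L z ** mexp (x *\<^sub>R mzpow L l) = mexp (x *\<^sub>R mzpow L l) ** mzpow L z"
  by (rule mexp_commute) (simp add: mzpow_commute)

lemma mzpow_mexp_commute_left:
  "invertible (L::complex^'n^'n) \<Longrightarrow>
    Y ** mzpow L z ** mexp (x *\<^sub>R mzpow L l) = Y ** mexp (x *\<^sub>R mzpow L l) ** mzpow L z"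
  by (simp add: mzpow_mexp_commute flip: matrix_mul_assoc)

lemma root_mzpow_right:
  assumes L: "invertible (L::complex^'n^'n)" and root: "- (mzpow L k + mzpow L (k - l)) = P"
  shows "Y ** mzpow L b ** P = - (Y ** mzpow L (b + k) + Y ** mzpow L (b + k - l))"
proof -
  have "Y ** mzpow L b ** P = - (Y ** mzpow L b ** mzpow L k + Y ** mzpow L b ** mzpow L (k - l))"
    by (simp add: root[symmetric] matrix_ring_simps)
  then show ?thesis
    by (simp add: mzpow_add_left[OF L] add_diff_eq)
qed

lemma root_mzpow_left:
  assumes L: "invertible (L::complex^'n^'n)" and root: "- (mzpow L k + mzpow L (k - l)) = Q"
  shows "Z ** Q ** mzpow L (- a) = - (Z ** mzpow L (- (a - k)) + Z ** mzpow L (- (a - k + l)))"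
proof -
  have "Z ** Q ** mzpow L (- a) = - (Z ** mzpow L k ** mzpow L (- a) + Z ** mzpow L (k - l) ** mzpow L (- a))"
    by (simp add: root[symmetric] matrix_ring_simps)
  then show ?thesis
    by (simp add: mzpow_add_left[OF L] algebra_simps)
qed

lemma root_mexp_commute:
  assumes L: "invertible (L::complex^'n^'n)" and root: "- (mzpow L k + mzpow L (k - l)) = Q"
  shows "Q ** mexp (x *\<^sub>R mzpow L l) = mexp (x *\<^sub>R mzpow L l) ** Q"
  unfolding root[symmetric] by (simp add: matrix_ring_simps mzpow_mexp_commute[OF L])

lemma has_vector_derivative_mexp_mzpow:
  assumes L: "invertible (L::complex^'n^'n)"
  shows "((\<lambda>s. Y ** mexp (s *\<^sub>R mzpow L l) ** mzpow L j) has_vector_derivative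
     Y ** mexp (t *\<^sub>R mzpow L l) ** mzpow L (j + l)) (at t)"
proof -
  have "((\<lambda>s. Y ** mexp (s *\<^sub>R mzpow L l) ** mzpow L j) has_vector_derivative
      Y ** mexp (t *\<^sub>R mzpow L l) ** 0
        + (Y ** (mzpow L l ** mexp (t *\<^sub>R mzpow L l)) + 0 ** mexp (t *\<^sub>R mzpow L l)) ** mzpow L j) (at t)"
    by (intro has_vector_derivative_matrix_mult has_vector_derivative_const has_vector_derivative_mexp)
  moreover have "Y ** mexp (t *\<^sub>R mzpow L l) ** mzpow L l ** mzpow L j
      = Y ** mexp (t *\<^sub>R mzpow L l) ** mzpow L (j + l)"
    using mzpow_add_left[OF L, of "Y ** mexp (t *\<^sub>R mzpow L l)" l j] by (simp add: add.commute)
  ultimately show ?thesis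
    by (simp add: matrix_mul_assoc mzpow_mexp_commute_left[OF L])
qed

lemma has_vector_derivative_mexp_neg_mzpow:
  assumes L: "invertible (L::complex^'n^'n)"
  shows "((\<lambda>s. mexp ((- s) *\<^sub>R mzpow L l) ** mzpow L (- j) ** Y) has_vector_derivative
     - (mexp ((- t) *\<^sub>R mzpow L l) ** mzpow L (- (j - l)) ** Y)) (at t)"
proof -
  have "((\<lambda>s. mexp (s *\<^sub>R - mzpow L l)) has_vector_derivative
      - mzpow L l ** mexp (t *\<^sub>R - mzpow L l)) (at t)"
    by (rule has_vector_derivative_mexp)
  then have wave: "((\<lambda>s. mexp ((- s) *\<^sub>R mzpow L l)) has_vector_derivative
      - (mexp ((- t) *\<^sub>R mzpow L l) ** mzpow L l)) (at t)"
    using mzpow_mexp_commute[OF L, of l "- t"] by (simp add: matrix_mul_minus_left)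
  have "((\<lambda>s. mexp ((- s) *\<^sub>R mzpow L l) ** mzpow L (- j) ** Y) has_vector_derivative
      mexp ((- t) *\<^sub>R mzpow L l) ** mzpow L (- j) ** 0
        + (mexp ((- t) *\<^sub>R mzpow L l) ** 0
          + (- (mexp ((- t) *\<^sub>R mzpow L l) ** mzpow L l)) ** mzpow L (- j)) ** Y) (at t)"
    by (intro has_vector_derivative_matrix_mult has_vector_derivative_const wave)
  moreover have "mexp ((- t) *\<^sub>R mzpow L l) ** mzpow L l ** mzpow L (- j)
      = mexp ((- t) *\<^sub>R mzpow L l) ** mzpow L (- (j - l))"
    by (simp add: mzpow_add_left[OF L])
  ultimately show ?thesis
    by (simp add: matrix_ring_simps)
qed

lemma has_vector_derivative_cross_term:
  assumes L: "invertible (L::complex^'n^'n)" and L': "invertible (L'::complex^'n^'n)"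
  shows "((\<lambda>s. mexp ((- s) *\<^sub>R mzpow L' l) ** mzpow L' (- a) ** Y ** mexp (s *\<^sub>R mzpow L l) ** mzpow L b)
    has_vector_derivative
      - (mexp ((- t) *\<^sub>R mzpow L' l) ** mzpow L' (- (a - l)) ** Y ** mexp (t *\<^sub>R mzpow L l) ** mzpow L b)
      + mexp ((- t) *\<^sub>R mzpow L' l) ** mzpow L' (- a) ** Y ** mexp (t *\<^sub>R mzpow L l) ** mzpow L (b + l))
    (at t)"
  using has_vector_derivative_matrix_mult[OF has_vector_derivative_mexp_neg_mzpow[OF L', where j = a and Y = Y and l = l and t = t]
      has_vector_derivative_mexp_mzpow[OF L, where Y = "mat 1" and j = b and l = l and t = t]]
  by (simp add: matrix_ring_simps add.commute)

lemma sylvester_shift: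
  assumes L: "invertible (L::complex^'n^'n)" and L': "invertible (L'::complex^'n^'n)"
    and sylvester: "mzpow L' (- l) ** X ** mzpow L l - X = B' ** A'"
  shows "Y ** mzpow L' (- (a + l)) ** X ** mexp (x *\<^sub>R mzpow L l) ** mzpow L (b + l)
    = Y ** mzpow L' (- a) ** X ** mexp (x *\<^sub>R mzpow L l) ** mzpow L b
      + Y ** mzpow L' (- a) ** B' ** (A' ** mexp (x *\<^sub>R mzpow L l) ** mzpow L b)"
proof -
  let ?E = "mexp (x *\<^sub>R mzpow L l)"
  have "mzpow L' (- (a + l)) = mzpow L' (- a) ** mzpow L' (- l)"
    using mzpow_add[OF L', of "- a" "- l"] by simp
  moreover have "mzpow L (b + l) = mzpow L l ** mzpow L b"
    using mzpow_add[OF L, of l b] by (simp add: add.commute)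
  ultimately have "Y ** mzpow L' (- (a + l)) ** X ** ?E ** mzpow L (b + l)
      = Y ** mzpow L' (- a) ** (mzpow L' (- l) ** X ** mzpow L l) ** ?E ** mzpow L b"
    by (simp add: matrix_ring_simps mzpow_mexp_commute_left[OF L, symmetric])
  also have "mzpow L' (- l) ** X ** mzpow L l = X + B' ** A'"
    using sylvester by (simp add: algebra_simps)
  finally show ?thesis
    by (simp add: matrix_ring_simps)
qed

locale exponential_sums =
  fixes k l :: int and P Q :: "complex^'n^'n" and RP RQ :: "(complex^'n^'n) set"
    and A :: "complex^'n^'n \<Rightarrow> complex^'n^'m" and B :: "complex^'n^'n \<Rightarrow> complex^'m^'n"
    and X :: "complex^'n^'n \<Rightarrow> complex^'n^'n \<Rightarrow> complex^'n^'n"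
    and \<omega> \<omega>' :: "real \<Rightarrow> complex^'n^'n"
  assumes RP_inv: "\<Lambda> \<in> RP \<Longrightarrow> invertible \<Lambda>"
    and RP_root: "\<Lambda> \<in> RP \<Longrightarrow> - (mzpow \<Lambda> k + mzpow \<Lambda> (k - l)) = P"
    and RQ_inv: "\<Lambda>' \<in> RQ \<Longrightarrow> invertible \<Lambda>'"
    and RQ_root: "\<Lambda>' \<in> RQ \<Longrightarrow> - (mzpow \<Lambda>' k + mzpow \<Lambda>' (k - l)) = Q"
    and X_sylvester: "\<Lambda> \<in> RP \<Longrightarrow> \<Lambda>' \<in> RQ \<Longrightarrow>
      mzpow \<Lambda>' (- l) ** X \<Lambda>' \<Lambda> ** mzpow \<Lambda> l - X \<Lambda>' \<Lambda> = B \<Lambda>' ** A \<Lambda>"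
    and omega_derivative: "(\<omega> has_vector_derivative \<omega>' t) (at t)"
    and Q_omega: "Q ** \<omega> t = \<omega> t ** P"
begin

definition "wave \<Lambda> t = mexp (t *\<^sub>R mzpow \<Lambda> l)"

definition "theta t j = (\<Sum>\<Lambda>\<in>RP. A \<Lambda> ** wave \<Lambda> t ** mzpow \<Lambda> j)"
definition "eta t j = (\<Sum>\<Lambda>'\<in>RQ. wave \<Lambda>' (- t) ** mzpow \<Lambda>' (- j) ** B \<Lambda>')"
text \<open>\<open>cross_sum t j j + \<omega> t\<close> is \<open>\<Omega>\<close>; decoupling the shifts of its two sides lets the root
  relations for \<open>RQ\<close> and for \<open>RP\<close> act separately.\<close>

definition "cross_sum t a b = (\<Sum>\<Lambda>\<in>RP. \<Sum>\<Lambda>'\<in>RQ.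
  wave \<Lambda>' (- t) ** mzpow \<Lambda>' (- a) ** X \<Lambda>' \<Lambda> ** wave \<Lambda> t ** mzpow \<Lambda> b)"
definition "Omega t j = cross_sum t j j + \<omega> t"
definition "gamma t = - \<omega>' t"

lemma Q_wave_mzpow:
  assumes "\<Lambda>' \<in> RQ"
  shows "Q ** (wave \<Lambda>' s ** mzpow \<Lambda>' (- a) ** Y)
    = - (wave \<Lambda>' s ** mzpow \<Lambda>' (- (a - k)) ** Y + wave \<Lambda>' s ** mzpow \<Lambda>' (- (a - k + l)) ** Y)"
proof -
  have "Q ** (wave \<Lambda>' s ** mzpow \<Lambda>' (- a) ** Y) = wave \<Lambda>' s ** Q ** mzpow \<Lambda>' (- a) ** Y"
    using root_mexp_commute[OF RQ_inv[OF assms] RQ_root[OF assms], of s]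
    unfolding wave_def by (simp only: matrix_mul_assoc)
  also have "\<dots> = - (wave \<Lambda>' s ** mzpow \<Lambda>' (- (a - k)) ** Y + wave \<Lambda>' s ** mzpow \<Lambda>' (- (a - k + l)) ** Y)"
    by (simp add: root_mzpow_left[OF RQ_inv[OF assms] RQ_root[OF assms]] matrix_ring_simps)
  finally show ?thesis .
qed

lemma theta_shift: "theta t (j + k) + theta t (j + k - l) = - (theta t j ** P)"
proof -
  have "theta t j ** P = (\<Sum>\<Lambda>\<in>RP.
      - (A \<Lambda> ** wave \<Lambda> t ** mzpow \<Lambda> (j + k) + A \<Lambda> ** wave \<Lambda> t ** mzpow \<Lambda> (j + k - l)))"
    unfolding theta_def matrix_mul_sum_left by (intro sum.cong refl root_mzpow_right RP_inv RP_root)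
  then show ?thesis
    unfolding theta_def by (simp add: sum.distrib sum_negf sum_subtractf)
qed

lemma eta_shift: "eta t (j - k) + eta t (j - k + l) = - (Q ** eta t j)"
proof -
  have "Q ** eta t j = (\<Sum>\<Lambda>'\<in>RQ. - (wave \<Lambda>' (- t) ** mzpow \<Lambda>' (- (j - k)) ** B \<Lambda>'
      + wave \<Lambda>' (- t) ** mzpow \<Lambda>' (- (j - k + l)) ** B \<Lambda>'))"
    unfolding eta_def matrix_mul_sum_right by (intro sum.cong refl Q_wave_mzpow)
  then show ?thesis
    unfolding eta_def by (simp add: sum.distrib sum_negf sum_subtractf)
qed

lemma cross_sum_shift: "cross_sum t (a + l) (b + l) = cross_sum t a b + eta t a ** theta t b"
proof -
  have "cross_sum t (a + l) (b + l) = (\<Sum>\<Lambda>\<in>RP. \<Sum>\<Lambda>'\<in>RQ.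
      wave \<Lambda>' (- t) ** mzpow \<Lambda>' (- a) ** X \<Lambda>' \<Lambda> ** wave \<Lambda> t ** mzpow \<Lambda> b
      + wave \<Lambda>' (- t) ** mzpow \<Lambda>' (- a) ** B \<Lambda>' ** (A \<Lambda> ** wave \<Lambda> t ** mzpow \<Lambda> b))"
    unfolding cross_sum_def wave_def
    by (intro sum.cong refl sylvester_shift RP_inv RQ_inv X_sylvester)
  also have "\<dots> = cross_sum t a b + (\<Sum>\<Lambda>\<in>RP. \<Sum>\<Lambda>'\<in>RQ.
      wave \<Lambda>' (- t) ** mzpow \<Lambda>' (- a) ** B \<Lambda>' ** (A \<Lambda> ** wave \<Lambda> t ** mzpow \<Lambda> b))"
    unfolding cross_sum_def by (simp add: sum.distrib)
  also have "(\<Sum>\<Lambda>\<in>RP. \<Sum>\<Lambda>'\<in>RQ.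
      wave \<Lambda>' (- t) ** mzpow \<Lambda>' (- a) ** B \<Lambda>' ** (A \<Lambda> ** wave \<Lambda> t ** mzpow \<Lambda> b))
      = eta t a ** theta t b"
    unfolding theta_def eta_def matrix_mul_sum_left matrix_mul_sum_right
    by (simp add: sum.swap[where A = RP])
  finally show ?thesis .
qed

lemma Q_cross_sum: "Q ** cross_sum t a b = - (cross_sum t (a - k) b + cross_sum t (a - k + l) b)"
proof -
  have "Q ** cross_sum t a b = (\<Sum>\<Lambda>\<in>RP. \<Sum>\<Lambda>'\<in>RQ.
      - (wave \<Lambda>' (- t) ** mzpow \<Lambda>' (- (a - k)) ** X \<Lambda>' \<Lambda> ** wave \<Lambda> t ** mzpow \<Lambda> b
        + wave \<Lambda>' (- t) ** mzpow \<Lambda>' (- (a - k + l)) ** X \<Lambda>' \<Lambda> ** wave \<Lambda> t ** mzpow \<Lambda> b))"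
    unfolding cross_sum_def matrix_mul_sum_right
    using Q_wave_mzpow[where Y = "X _ _ ** wave _ t ** mzpow _ b"]
    by (intro sum.cong refl) (simp only: matrix_mul_assoc)
  then show ?thesis
    unfolding cross_sum_def by (simp add: sum.distrib sum_negf sum_subtractf)
qed

lemma cross_sum_P: "cross_sum t a b ** P = - (cross_sum t a (b + k) + cross_sum t a (b + k - l))"
proof -
  have "cross_sum t a b ** P = (\<Sum>\<Lambda>\<in>RP. \<Sum>\<Lambda>'\<in>RQ.
      - (wave \<Lambda>' (- t) ** mzpow \<Lambda>' (- a) ** X \<Lambda>' \<Lambda> ** wave \<Lambda> t ** mzpow \<Lambda> (b + k)
        + wave \<Lambda>' (- t) ** mzpow \<Lambda>' (- a) ** X \<Lambda>' \<Lambda> ** wave \<Lambda> t ** mzpow \<Lambda> (b + k - l)))"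
    unfolding cross_sum_def matrix_mul_sum_left
    by (intro sum.cong refl root_mzpow_right[OF RP_inv RP_root])
  then show ?thesis
    unfolding cross_sum_def by (simp add: sum.distrib sum_negf sum_subtractf)
qed

lemma has_vector_derivative_theta: "((\<lambda>s. theta s j) has_vector_derivative theta t (j + l)) (at t)"
  unfolding theta_def wave_def
  by (intro has_vector_derivative_sum has_vector_derivative_mexp_mzpow RP_inv)

lemma has_vector_derivative_eta: "((\<lambda>s. eta s j) has_vector_derivative - eta t (j - l)) (at t)"
proof -
  have "((\<lambda>s. eta s j) has_vector_derivative
      (\<Sum>\<Lambda>'\<in>RQ. - (wave \<Lambda>' (- t) ** mzpow \<Lambda>' (- (j - l)) ** B \<Lambda>'))) (at t)"
    unfolding eta_def wave_def
    by (intro has_vector_derivative_sum has_vector_derivative_mexp_neg_mzpow RQ_inv)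
  then show ?thesis
    by (simp add: eta_def sum_negf)
qed

lemma has_vector_derivative_cross_sum:
  "((\<lambda>s. cross_sum s a b) has_vector_derivative eta t (a - l) ** theta t b) (at t)"
proof -
  have "((\<lambda>s. cross_sum s a b) has_vector_derivative (\<Sum>\<Lambda>\<in>RP. \<Sum>\<Lambda>'\<in>RQ.
      - (wave \<Lambda>' (- t) ** mzpow \<Lambda>' (- (a - l)) ** X \<Lambda>' \<Lambda> ** wave \<Lambda> t ** mzpow \<Lambda> b)
      + wave \<Lambda>' (- t) ** mzpow \<Lambda>' (- a) ** X \<Lambda>' \<Lambda> ** wave \<Lambda> t ** mzpow \<Lambda> (b + l))) (at t)"
    unfolding cross_sum_def wave_def
    by (intro has_vector_derivative_sum has_vector_derivative_cross_term RP_inv RQ_inv)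
  moreover have "(\<Sum>\<Lambda>\<in>RP. \<Sum>\<Lambda>'\<in>RQ.
      - (wave \<Lambda>' (- t) ** mzpow \<Lambda>' (- (a - l)) ** X \<Lambda>' \<Lambda> ** wave \<Lambda> t ** mzpow \<Lambda> b)
      + wave \<Lambda>' (- t) ** mzpow \<Lambda>' (- a) ** X \<Lambda>' \<Lambda> ** wave \<Lambda> t ** mzpow \<Lambda> (b + l))
      = - cross_sum t (a - l) b + cross_sum t a (b + l)"
    unfolding cross_sum_def by (simp add: sum.distrib sum_negf sum_subtractf)
  moreover have "cross_sum t a (b + l) = cross_sum t (a - l) b + eta t (a - l) ** theta t b"
    using cross_sum_shift[of t "a - l" b] by simp
  ultimately show ?thesis
    by simp
qed

lemma Omega_shift: "Omega t (j + l) = Omega t j + eta t j ** theta t j"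
  by (simp add: Omega_def cross_sum_shift)

lemma Q_Omega: "Q ** Omega t (j + k) = Omega t j ** P - eta t j ** theta t (j + k - l)"
proof -
  have "Q ** cross_sum t (j + k) (j + k) = - (cross_sum t j (j + k) + cross_sum t (j + l) (j + k))"
    using Q_cross_sum[of t "j + k" "j + k"] by simp
  also have "cross_sum t (j + l) (j + k) = cross_sum t j (j + k - l) + eta t j ** theta t (j + k - l)"
    using cross_sum_shift[of t j "j + k - l"] by simp
  also have "- (cross_sum t j (j + k) + (cross_sum t j (j + k - l) + eta t j ** theta t (j + k - l)))
      = cross_sum t j j ** P - eta t j ** theta t (j + k - l)"
    using cross_sum_P[of t j j] by (simp add: algebra_simps)
  finally show ?thesis
    by (simp add: Omega_def matrix_ring_simps Q_omega)
qed

lemma has_vector_derivative_Omega: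
  "((\<lambda>s. Omega s j) has_vector_derivative eta t (j - l) ** theta t j - gamma t) (at t)"
  unfolding Omega_def gamma_def
  using has_vector_derivative_add[OF has_vector_derivative_cross_sum omega_derivative] by simp

lemma Q_gamma: "Q ** gamma t = gamma t ** P"
proof -
  have "((\<lambda>s. Q ** \<omega> s) has_vector_derivative Q ** \<omega>' t + 0 ** \<omega> t) (at t)"
    by (intro has_vector_derivative_matrix_mult has_vector_derivative_const omega_derivative)
  moreover have "((\<lambda>s. Q ** \<omega> s) has_vector_derivative \<omega> t ** 0 + \<omega>' t ** P) (at t)"
    unfolding Q_omega by (intro has_vector_derivative_matrix_mult has_vector_derivative_const omega_derivative)
  ultimately have "Q ** \<omega>' t = \<omega>' t ** P"
    using vector_derivative_unique_at by fastforce
  then show ?thesis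
    by (simp add: gamma_def matrix_mul_minus_left matrix_mul_minus_right)
qed

lemma dressing_flow_exponential_sums: "(\<And>t j. invertible (Omega t j)) \<Longrightarrow> dressing_flow theta eta Omega P Q gamma k l"
  by unfold_locales (simp_all add: Omega_shift theta_shift eta_shift Q_Omega Q_gamma
      has_vector_derivative_theta has_vector_derivative_eta has_vector_derivative_Omega)

end

theorem mainTheorem2:
  fixes k l :: int
    and P Q :: "complex^'n^'n"
    and RP RQ :: "(complex^'n^'n) set"
    and A :: "complex^'n^'n \<Rightarrow> complex^'n^'m"
    and B :: "complex^'n^'n \<Rightarrow> complex^'m^'n"
    and X :: "complex^'n^'n \<Rightarrow> complex^'n^'n \<Rightarrow> complex^'n^'n"
    and \<omega> \<omega>' :: "real \<Rightarrow> complex^'n^'n"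
    and \<gamma>2 :: "real \<Rightarrow> complex^'n^'n"
    and \<theta> :: "real \<Rightarrow> int \<Rightarrow> complex^'n^'m"
    and \<eta> :: "real \<Rightarrow> int \<Rightarrow> complex^'m^'n"
    and \<Omega> :: "real \<Rightarrow> int \<Rightarrow> complex^'n^'n"
    and g0 :: "complex^'m^'m"
    and g :: "real \<Rightarrow> int \<Rightarrow> complex^'m^'m"
    and q :: "real \<Rightarrow> int \<Rightarrow> complex^'n^'m"
    and r :: "real \<Rightarrow> int \<Rightarrow> complex^'m^'n"
  assumes k_pos: "k > 0"
    and RP_fin: "finite RP"
    and RP_inv: "\<And>\<Lambda>. \<Lambda> \<in> RP \<Longrightarrow> invertible \<Lambda>"
    and RP_root: "\<And>\<Lambda>. \<Lambda> \<in> RP \<Longrightarrow> - (mzpow \<Lambda> k + mzpow \<Lambda> (k - l)) = P"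
    and RQ_fin: "finite RQ"
    and RQ_inv: "\<And>\<Lambda>'. \<Lambda>' \<in> RQ \<Longrightarrow> invertible \<Lambda>'"
    and RQ_root: "\<And>\<Lambda>'. \<Lambda>' \<in> RQ \<Longrightarrow> - (mzpow \<Lambda>' k + mzpow \<Lambda>' (k - l)) = Q"
    and X_eq: "\<And>\<Lambda> \<Lambda>'. \<Lambda> \<in> RP \<Longrightarrow> \<Lambda>' \<in> RQ \<Longrightarrow>
        mzpow \<Lambda>' (- l) ** X \<Lambda>' \<Lambda> ** mzpow \<Lambda> l - X \<Lambda>' \<Lambda> = B \<Lambda>' ** A \<Lambda>"
    and \<omega>_deriv: "\<And>t. (\<omega> has_vector_derivative \<omega>' t) (at t)"
    and \<omega>_comm: "\<And>t. Q ** \<omega> t = \<omega> t ** P"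
    and \<gamma>2_def: "\<And>t. \<gamma>2 t = - \<omega>' t"
    and \<theta>_def: "\<And>t j. \<theta> t j = (\<Sum>\<Lambda>\<in>RP. A \<Lambda> ** mexp (t *\<^sub>R mzpow \<Lambda> l) ** mzpow \<Lambda> j)"
    and \<eta>_def: "\<And>t j. \<eta> t j = (\<Sum>\<Lambda>'\<in>RQ. mexp ((- t) *\<^sub>R mzpow \<Lambda>' l) ** mzpow \<Lambda>' (- j) ** B \<Lambda>')"
    and \<Omega>_def: "\<And>t j. \<Omega> t j = (\<Sum>\<Lambda>\<in>RP. \<Sum>\<Lambda>'\<in>RQ.
        mexp ((- t) *\<^sub>R mzpow \<Lambda>' l) ** mzpow \<Lambda>' (- j) ** X \<Lambda>' \<Lambda>
          ** mexp (t *\<^sub>R mzpow \<Lambda> l) ** mzpow \<Lambda> j) + \<omega> t"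
    and \<Omega>_inv: "\<And>t j. invertible (\<Omega> t j)"
    and g0_inv: "invertible g0"
    and g_def: "\<And>t j. g t j = (mat 1 - \<theta> t j ** matrix_inv (\<Omega> t (j + l)) ** \<eta> t j) ** g0"
    and q_def: "\<And>t j. q t j = \<theta> t j ** matrix_inv (\<Omega> t (j + l)) ** \<gamma>2 t"
    and r_def: "\<And>t j. r t j = matrix_inv (\<Omega> t j) ** \<eta> t j"
    and g_inv: "\<And>t j. invertible (g t j)"
  shows "\<forall>t j.
      ((\<lambda>s. g s j ** matrix_inv (g s (j + k))) has_vector_derivative
         (q t (j + l - l) ** r t (j + l) - q t (j + k - l) ** r t (j + k)
          - g t (j + (k - l)) ** matrix_inv (g t (j + (k - l) + l))
          + g t j ** matrix_inv (g t (j + l)))) (at t)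
    \<and> q t (j + (k - l)) + q t j ** P + g t j ** matrix_inv (g t (j + k)) ** q t (j + k) = 0
    \<and> r t (j + (l - k)) + P ** r t j + r t (j - k) ** g t (j - k) ** matrix_inv (g t j) = 0"
proof -
  interpret exponential_sums k l P Q RP RQ A B X \<omega> \<omega>'
    using RP_inv RP_root RQ_inv RQ_root X_eq \<omega>_deriv \<omega>_comm by unfold_locales
  have sums: "\<theta> = theta" "\<eta> = eta" "\<Omega> = Omega" "\<gamma>2 = gamma"
    by (simp_all add: fun_eq_iff \<theta>_def theta_def \<eta>_def eta_def \<Omega>_def Omega_def cross_sum_def
        wave_def \<gamma>2_def gamma_def)
  interpret dressing_flow \<theta> \<eta> \<Omega> P Q \<gamma>2 k l
    using dressing_flow_exponential_sums \<Omega>_inv unfolding sums by blast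
  have g_quotient: "g t a ** matrix_inv (g t b) = G t a ** H t b" for t a b
    using dressing_relations.G_quotient[OF relations g0_inv]
    by (simp add: g_def dressing_relations.G_def[OF relations])
  have idx: "j + l - l = j" "j + (k - l) = j + k - l" "j + (k - l) + l = j + k"
    "j + (l - k) = j - k + l" for j :: int
    by simp_all
  show ?thesis
    apply (intro allI conjI)
    subgoal for t j
      using has_vector_derivative_G_H[of j t]
      unfolding g_quotient idx q_def r_def dressing_relations.G_logderiv_H_diff[OF relations]
      by (simp add: matrix_mul_assoc)
    subgoal for t j
      using dressing_relations.q_relation[OF relations[of t], of j]
      unfolding g_quotient idx q_def by (simp add: matrix_mul_assoc)
    subgoal for t j
      using dressing_relations.r_relation[OF relations[of t], of "j - k"] g_quotient[of t "j - k" j]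
      unfolding idx r_def by (simp flip: matrix_mul_assoc)
    done
qed

end
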